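(* Let $H=1$ and assume the MDP satisfies the low-rank assumption with parameter $d$ (i.e. $r_1$ has rank at most $\lfloor d/2\rfloor$). In the infinite-sample setting (the values $r_1(s,a)$ are known for $(s,a)\in\operatorname{supp}(d^{\pi^\beta})$), let $\widehat Q$ be a minimizer of $\|M\|_{\max}$ over $M\in\mathbb R^{S\times A}$ subject to $\mathbb 1_{d^{\pi^\beta}}\circ M=\mathbb 1_{d^{\pi^\beta}}\circ r_1$ and $\|M\|_\infty\le1$, and let $\widehat J=\sum_{s,a}\mu_1(s)\pi^\theta_1(a\mid s)\widehat Q(s,a)$. Then \[ \big|\widehat J - J^{\pi^\theta}\big|\le2\sqrt{dSA}\,\operatorname{Dis}\big(d^{\pi^\beta},d^{\pi^\theta}\big). \]
   Context: Contextual bandit: finite state (context) set $\mathcal S$, $S=|\mathcal S|$, finite action set $\mathcal A$, $A=|\mathcal A|$, reward $r_1:\mathcal S\times\mathcal A\to[0,1]$, context distribution $\mu_1$. For a policy $\pi_1:\mathcal S\to\Delta(\mathcal A)$, $d^\pi(s,a)=\mu_1(s)\pi_1(a\mid s)$ and $J^\pi=\sum_{s,a}d^\pi(s,a)r_1(s,a)$; $\pi^\theta$ is the target and $\pi^\beta$ the behavior policy. Functions on $\mathcal S\times\mathcal A$ are viewed as $S\times A$ matrices. $\|M\|_{\max}=\min_{U,V:\,M=UV^\top}\|U\|_{2\to\infty}\|V\|_{2\to\infty}$ ($\|\cdot\|_{2\to\infty}$ maximum row Euclidean norm), $\|M\|_\infty=\max|M_{ij}|$, $\mathbb 1_M$ support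 indicator, $\circ$ entrywise product, $\|\cdot\|_{\mathrm{op}}$ spectral norm. Operator discrepancy: $\operatorname{Dis}(p,q)=\min\{\|g-q\|_{\mathrm{op}}:g\in\Delta(\mathcal S\times\mathcal A),\ \operatorname{supp}(g)\subseteq\operatorname{supp}(p)\}$. *)

theory Defs
  imports "HOL-Analysis.Analysis"
begin

text \<open>Matrices on S x A are elements of real^'a^'s (row index s, column index a).\<close>

definition two_to_inf_norm :: "('r::finite \<Rightarrow> nat \<Rightarrow> real) \<Rightarrow> nat \<Rightarrow> real" where
  "two_to_inf_norm U k = Max (range (\<lambda>i. sqrt (\<Sum>l<k. (U i l)\<^sup>2)))"

definition max_norm :: "real^'a::finite^'s::finite \<Rightarrow> real" where
  "max_norm M = Inf {two_to_inf_norm U k * two_to_inf_norm V k | U V k.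
      \<forall>s a. M $ s $ a = (\<Sum>l<k. U s l * V a l)}"

definition entry_inf_norm :: "real^'a::finite^'s::finite \<Rightarrow> real" where
  "entry_inf_norm M = Max (range (\<lambda>(s,a). \<bar>M $ s $ a\<bar>))"

definition op_norm :: "real^'a::finite^'s::finite \<Rightarrow> real" where
  "op_norm M = onorm (\<lambda>x. M *v x)"

definition is_distr :: "real^'a::finite^'s::finite \<Rightarrow> bool" where
  "is_distr g \<longleftrightarrow> (\<forall>s a. g $ s $ a \<ge> 0) \<and> (\<Sum>s\<in>UNIV. \<Sum>a\<in>UNIV. g $ s $ a) = 1"

definition supp :: "real^'a::finite^'s::finite \<Rightarrow> ('s \<times> 'a) set" where
  "supp g = {(s,a). g $ s $ a \<noteq> 0}"

definition Dis :: "real^'a::finite^'s::finite \<Rightarrow> real^'a^'s \<Rightarrow> real" where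
  "Dis p q = Inf {op_norm (g - q) | g. is_distr g \<and> supp g \<subseteq> supp p}"

text \<open>Occupancy d^pi(s,a) = mu(s) pi(a|s) for H = 1.\<close>
definition occ :: "('s::finite \<Rightarrow> real) \<Rightarrow> ('s \<Rightarrow> 'a::finite \<Rightarrow> real) \<Rightarrow> real^'a^'s" where
  "occ \<mu> \<pi> = (\<chi> s a. \<mu> s * \<pi> s a)"

definition policy_value :: "('s::finite \<Rightarrow> real) \<Rightarrow> ('s \<Rightarrow> 'a::finite \<Rightarrow> real) \<Rightarrow> real^'a^'s \<Rightarrow> real" where
  "policy_value \<mu> \<pi> r = (\<Sum>s\<in>UNIV. \<Sum>a\<in>UNIV. occ \<mu> \<pi> $ s $ a * r $ s $ a)"

definition is_policy :: "('s::finite \<Rightarrow> 'a::finite \<Rightarrow> real) \<Rightarrow> bool" where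
  "is_policy \<pi> \<longleftrightarrow> (\<forall>s a. \<pi> s a \<ge> 0) \<and> (\<forall>s. (\<Sum>a\<in>UNIV. \<pi> s a) = 1)"

definition is_state_distr :: "('s::finite \<Rightarrow> real) \<Rightarrow> bool" where
  "is_state_distr \<mu> \<longleftrightarrow> (\<forall>s. \<mu> s \<ge> 0) \<and> (\<Sum>s\<in>UNIV. \<mu> s) = 1"

definition feasible :: "real^'a::finite^'s::finite \<Rightarrow> real^'a^'s \<Rightarrow> real^'a^'s \<Rightarrow> bool" where
  "feasible dbeta r M \<longleftrightarrow>
     (\<forall>s a. (s,a) \<in> supp dbeta \<longrightarrow> M $ s $ a = r $ s $ a) \<and> entry_inf_norm M \<le> 1"

end

theory Submission
  imports Defs
begin

text \<open>\<open>Qhat\<close> and \<open>r\<close> agree on the support of \<open>d\<^sup>\<beta>\<close>, so for every distribution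
  \<open>g\<close> supported there the error is \<open>\<langle>g - d\<^sup>\<theta>, r - Qhat\<rangle>\<close>, and the duality
  \<open>|\<langle>X, M\<rangle>| \<le> \<parallel>X\<parallel>\<^sub>o\<^sub>p \<surd>(SA) \<parallel>M\<parallel>\<^sub>m\<^sub>a\<^sub>x\<close> bounds it. Minimality gives
  \<open>\<parallel>Qhat\<parallel>\<^sub>m\<^sub>a\<^sub>x \<le> \<parallel>r\<parallel>\<^sub>m\<^sub>a\<^sub>x\<close>, and a rank-\<open>k\<close> matrix with entries in \<open>[-1, 1]\<close> has max norm
  at most \<open>\<surd>(2k)\<close>: write \<open>r s a = u s \<bullet> v a\<close> with the rows \<open>u s\<close> and the projections
  \<open>v a\<close> of the unit vectors onto the row space \<open>W\<close>. While some unit \<open>w \<in> W\<close> has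
  \<open>(u s \<bullet> w)\<^sup>2 < \<delta> max\<^sub>s \<parallel>u s\<parallel>\<^sup>2\<close> for all \<open>s\<close>, stretch the \<open>u s\<close> by \<open>\<surd>2\<close> along \<open>w\<close> and
  shrink the \<open>v a\<close> inversely. The volume of a frame of \<open>k\<close> independent rows grows by \<open>\<surd>2\<close>,
  the \<open>k\<close>-th power of the largest row norm by at most \<open>(1 + \<delta>)\<^bsup>k/2\<^esup>\<close>, so for
  \<open>\<delta> = 1/(2k)\<close> the normalised volume grows geometrically and the process stops. Then
  \<open>|u s \<bullet> v a| \<le> 1\<close> forces \<open>\<parallel>v a\<parallel> \<le> 1 / (\<surd>\<delta> max\<^sub>s \<parallel>u s\<parallel>)\<close>.\<close>

lemma le_mult_Inf:
  fixes Y :: "real set"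
  assumes "Y \<noteq> {}" "\<And>y. y \<in> Y \<Longrightarrow> c \<le> K * y" "0 \<le> K"
  shows "c \<le> K * Inf Y"
proof (cases "K = 0")
  case False
  then have K: "0 < K" using assms(3) by simp
  have "c / K \<le> Inf Y"
    using assms(1,2) K by (intro cInf_greatest) (simp_all add: pos_divide_le_eq mult.commute)
  then show ?thesis using K by (simp add: pos_divide_le_eq mult.commute)
qed (use assms in auto)

lemma two_to_inf_norm_ge: "sqrt (\<Sum>l<k. (U i l)\<^sup>2) \<le> two_to_inf_norm U k"
  unfolding two_to_inf_norm_def by (rule Max_ge) auto

lemma two_to_inf_norm_nonneg: "0 \<le> two_to_inf_norm U k"
  using two_to_inf_norm_ge[where U = U and k = k and i = undefined]
  by (meson order_trans real_sqrt_ge_zero sum_nonneg zero_le_power2)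

lemma two_to_inf_norm_le:
  assumes "\<And>i. sqrt (\<Sum>l<k. (U i l)\<^sup>2) \<le> b"
  shows "two_to_inf_norm U k \<le> b"
  unfolding two_to_inf_norm_def using assms by (subst Max_le_iff) auto

lemma max_norm_le_factorization:
  assumes "\<forall>s a. M $ s $ a = (\<Sum>l<k. U s l * V a l)"
  shows "max_norm M \<le> two_to_inf_norm U k * two_to_inf_norm V k"
  unfolding max_norm_def
proof (rule cInf_lower)
  show "bdd_below {two_to_inf_norm U k * two_to_inf_norm V k |U V k.
      \<forall>s a. M $ s $ a = (\<Sum>l<k. U s l * V a l)}"
    by (rule bdd_belowI[of _ 0]) (auto intro!: mult_nonneg_nonneg two_to_inf_norm_nonneg)
qed (use assms in blast)

lemma inner_factorization:
  fixes u :: "'s \<Rightarrow> real^'n::finite" and v :: "'a \<Rightarrow> real^'n"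
  obtains U V and k :: nat where "\<forall>s a. u s \<bullet> v a = (\<Sum>l<k. U s l * V a l)"
    "\<And>s. sqrt (\<Sum>l<k. (U s l)\<^sup>2) = norm (u s)" "\<And>a. sqrt (\<Sum>l<k. (V a l)\<^sup>2) = norm (v a)"
proof -
  obtain h where h: "bij_betw h {..<CARD('n)} (UNIV::'n set)"
    using ex_bij_betw_nat_finite[of "UNIV::'n set"] by (auto simp: atLeast0LessThan)
  have reindex: "(\<Sum>l<CARD('n). f (h l)) = (\<Sum>j\<in>UNIV. f j)" for f :: "'n \<Rightarrow> real"
    using sum.reindex_bij_betw[OF h] by simp
  show thesis
  proof
    show "\<forall>s a. u s \<bullet> v a = (\<Sum>l<CARD('n). u s $ h l * v a $ h l)"
      by (simp add: reindex[of "\<lambda>j. u _ $ j * v _ $ j"] inner_vec_def)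
    show "sqrt (\<Sum>l<CARD('n). (u s $ h l)\<^sup>2) = norm (u s)" for s
      by (simp add: reindex[of "\<lambda>j. (u s $ j)\<^sup>2"] norm_vec_def L2_set_def)
    show "sqrt (\<Sum>l<CARD('n). (v a $ h l)\<^sup>2) = norm (v a)" for a
      by (simp add: reindex[of "\<lambda>j. (v a $ j)\<^sup>2"] norm_vec_def L2_set_def)
  qed
qed

lemma max_norm_le_inner_factorization:
  fixes M :: "real^'a::finite^'s::finite" and u :: "'s \<Rightarrow> real^'n::finite" and v :: "'a \<Rightarrow> real^'n"
  assumes "\<forall>s a. M $ s $ a = u s \<bullet> v a" "\<forall>s. norm (u s) \<le> bu" "\<forall>a. norm (v a) \<le> bv"
  shows "max_norm M \<le> bu * bv"
proof -
  obtain U V and k :: nat where fac: "\<forall>s a. u s \<bullet> v a = (\<Sum>l<k. U s l * V a l)"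
    and U: "\<And>s. sqrt (\<Sum>l<k. (U s l)\<^sup>2) = norm (u s)" and V: "\<And>a. sqrt (\<Sum>l<k. (V a l)\<^sup>2) = norm (v a)"
    using inner_factorization[of u v] by blast
  have "max_norm M \<le> two_to_inf_norm U k * two_to_inf_norm V k"
    by (rule max_norm_le_factorization) (simp add: assms(1) fac)
  also have "\<dots> \<le> bu * bv"
  proof (rule mult_mono)
    show "0 \<le> bu" using assms(2) norm_ge_zero order_trans by metis
  qed (use assms(2,3) in \<open>auto intro!: two_to_inf_norm_le two_to_inf_norm_nonneg simp: U V\<close>)
  finally show ?thesis .
qed

lemma exists_factorization:
  fixes M :: "real^'a::finite^'s::finite"
  shows "\<exists>U V (k::nat). \<forall>s a. M $ s $ a = (\<Sum>l<k. U s l * V a l)"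
proof -
  have "\<exists>U V (k::nat). \<forall>s a. (M $ s) \<bullet> axis a 1 = (\<Sum>l<k. U s l * V a l)"
    by (rule inner_factorization[of "vec_nth M" "\<lambda>a. axis a 1"]) blast
  then show ?thesis by (simp add: inner_axis)
qed

lemma max_norm_nonneg: "0 \<le> max_norm M"
  unfolding max_norm_def using exists_factorization[of M]
  by (intro cInf_greatest) (auto intro!: mult_nonneg_nonneg two_to_inf_norm_nonneg)

definition entry_inner :: "real^'a::finite^'s::finite \<Rightarrow> real^'a^'s \<Rightarrow> real" where
  "entry_inner X M = (\<Sum>s\<in>UNIV. \<Sum>a\<in>UNIV. X $ s $ a * M $ s $ a)"

lemma entry_inner_diff_left: "entry_inner (X - Y) M = entry_inner X M - entry_inner Y M"
  by (simp add: entry_inner_def left_diff_distrib sum_subtractf)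

lemma op_norm_nonneg: "0 \<le> op_norm X"
  unfolding op_norm_def by (rule onorm_pos_le) simp

lemma norm_matrix_vector_mult_le: "norm (X *v x) \<le> op_norm X * norm x"
  unfolding op_norm_def using onorm[OF matrix_vector_mul_bounded_linear, of X x] by simp

lemma sum_square_le_two_to_inf_norm: "(\<Sum>l<k. (U i l)\<^sup>2) \<le> (two_to_inf_norm U k)\<^sup>2"
proof -
  have "(sqrt (\<Sum>l<k. (U i l)\<^sup>2))\<^sup>2 \<le> (two_to_inf_norm U k)\<^sup>2"
    by (rule power_mono[OF two_to_inf_norm_ge]) (simp add: sum_nonneg)
  then show ?thesis by (simp add: sum_nonneg)
qed

lemma L2_set_column_norms_le:
  fixes U :: "'r::finite \<Rightarrow> nat \<Rightarrow> real"
  shows "L2_set (\<lambda>l. norm (\<chi> i. U i l)) {..<k} \<le> sqrt CARD('r) * two_to_inf_norm U k"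
proof -
  have "L2_set (\<lambda>l. norm (\<chi> i. U i l)) {..<k} = sqrt (\<Sum>i\<in>UNIV. \<Sum>l<k. (U i l)\<^sup>2)"
    by (simp add: L2_set_def norm_vec_def sum_nonneg sum.swap[where A="{..<k}"])
  also have "\<dots> \<le> sqrt (\<Sum>i\<in>(UNIV::'r set). (two_to_inf_norm U k)\<^sup>2)"
    by (intro real_sqrt_le_mono sum_mono sum_square_le_two_to_inf_norm)
  also have "\<dots> = sqrt CARD('r) * two_to_inf_norm U k"
    by (simp add: real_sqrt_mult two_to_inf_norm_nonneg)
  finally show ?thesis .
qed

text \<open>Each rank-one term \<open>x y\<^sup>T\<close> of a factorization pairs with \<open>X\<close> to \<open>x \<bullet> X y\<close>;
  Cauchy-Schwarz over the terms gives the duality between operator and max norm.\<close>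
lemma abs_entry_inner_le_factorization:
  fixes X M :: "real^'a::finite^'s::finite"
  assumes fac: "\<forall>s a. M $ s $ a = (\<Sum>l<k. U s l * V a l)"
  shows "\<bar>entry_inner X M\<bar>
    \<le> op_norm X * sqrt CARD('s) * sqrt CARD('a) * (two_to_inf_norm U k * two_to_inf_norm V k)"
proof -
  define x where "x l = (\<chi> s. U s l)" for l
  define y where "y l = (\<chi> a. V a l)" for l
  have "entry_inner X M = (\<Sum>l<k. \<Sum>s\<in>UNIV. \<Sum>a\<in>UNIV. X $ s $ a * U s l * V a l)"
    unfolding entry_inner_def using fac
    by (simp add: sum_distrib_left mult.assoc sum.swap[where B="{..<k}"])
  also have "\<dots> = (\<Sum>l<k. x l \<bullet> (X *v y l))"
    by (simp add: x_def y_def inner_vec_def matrix_vector_mult_def sum_distrib_left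
        mult.assoc mult.left_commute)
  finally have "\<bar>entry_inner X M\<bar> \<le> (\<Sum>l<k. \<bar>x l \<bullet> (X *v y l)\<bar>)"
    by (simp add: sum_abs)
  also have "\<dots> \<le> (\<Sum>l<k. norm (x l) * (op_norm X * norm (y l)))"
    by (intro sum_mono order_trans[OF Cauchy_Schwarz_ineq2] mult_left_mono
        norm_matrix_vector_mult_le norm_ge_zero)
  also have "\<dots> = op_norm X * (\<Sum>l<k. norm (x l) * norm (y l))"
    by (simp add: sum_distrib_left mult.assoc mult.left_commute)
  also have "\<dots> \<le> op_norm X * (L2_set (\<lambda>l. norm (x l)) {..<k} * L2_set (\<lambda>l. norm (y l)) {..<k})"
    using L2_set_mult_ineq[of "\<lambda>l. norm (x l)" "\<lambda>l. norm (y l)" "{..<k}"]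
    by (intro mult_left_mono op_norm_nonneg) simp_all
  also have "\<dots> \<le> op_norm X * ((sqrt CARD('s) * two_to_inf_norm U k) * (sqrt CARD('a) * two_to_inf_norm V k))"
    unfolding x_def y_def
    by (intro mult_left_mono mult_mono L2_set_column_norms_le op_norm_nonneg)
      (auto intro!: L2_set_nonneg mult_nonneg_nonneg two_to_inf_norm_nonneg)
  also have "\<dots> = op_norm X * sqrt CARD('s) * sqrt CARD('a) * (two_to_inf_norm U k * two_to_inf_norm V k)"
    by (simp only: mult_ac)
  finally show ?thesis .
qed

lemma abs_entry_inner_le_max_norm:
  fixes X M :: "real^'a::finite^'s::finite"
  shows "\<bar>entry_inner X M\<bar> \<le> op_norm X * sqrt CARD('s) * sqrt CARD('a) * max_norm M"
  unfolding max_norm_def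
proof (rule le_mult_Inf)
  show "{two_to_inf_norm U k * two_to_inf_norm V k |U V k. \<forall>s a. M $ s $ a = (\<Sum>l<k. U s l * V a l)} \<noteq> {}"
    using exists_factorization[of M] by blast
qed (auto simp: op_norm_nonneg abs_entry_inner_le_factorization)

definition stretch :: "real \<Rightarrow> real^'n \<Rightarrow> real^'n \<Rightarrow> real^'n" where
  "stretch t w x = x + ((t - 1) * (w \<bullet> x)) *\<^sub>R w"

lemma linear_stretch: "linear (stretch t w)"
  unfolding stretch_def linear_iff by (simp add: algebra_simps inner_add_right)

lemma stretch_orthogonal: "w \<bullet> x = 0 \<Longrightarrow> stretch t w x = x"
  by (simp add: stretch_def)

lemma stretch_in_subspace: "subspace W \<Longrightarrow> w \<in> W \<Longrightarrow> x \<in> W \<Longrightarrow> stretch t w x \<in> W"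
  unfolding stretch_def by (simp add: subspace_add subspace_scale)

lemma inner_stretch_stretch_inverse:
  assumes "norm w = 1" "t \<noteq> 0"
  shows "stretch t w x \<bullet> stretch (1 / t) w y = x \<bullet> y"
proof -
  have "w \<bullet> w = 1" using assms(1) by (simp add: norm_eq_1)
  then show ?thesis using assms(2)
    by (simp add: stretch_def inner_add_left inner_add_right inner_commute[of x w] algebra_simps)
qed

lemma norm_stretch_squared:
  assumes "norm w = 1"
  shows "(norm (stretch t w x))\<^sup>2 = (norm x)\<^sup>2 + (t\<^sup>2 - 1) * (w \<bullet> x)\<^sup>2"
proof -
  have "w \<bullet> w = 1" using assms by (simp add: norm_eq_1)
  have "(norm (stretch t w x))\<^sup>2 = stretch t w x \<bullet> stretch t w x"
    by (rule power2_norm_eq_inner)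
  also have "\<dots> = x \<bullet> x + (t\<^sup>2 - 1) * (w \<bullet> x)\<^sup>2"
    using \<open>w \<bullet> w = 1\<close>
    by (simp add: stretch_def inner_add_left inner_add_right inner_commute[of x w]
        power2_eq_square algebra_simps)
  finally show ?thesis by (simp add: power2_norm_eq_inner)
qed

text \<open>Conjugating by an orthogonal map that sends a coordinate axis to \<open>w\<close> reduces the claim to
  a diagonal matrix.\<close>
lemma det_matrix_stretch:
  fixes w :: "real^'n"
  assumes "norm w = 1"
  shows "det (matrix (stretch t w)) = t"
proof -
  fix i0 :: 'n
  let ?e = "axis i0 (1::real)"
  obtain g where g: "orthogonal_transformation g" "g ?e = w"
    using orthogonal_transformation_exists[of ?e w] assms by auto
  have lg: "linear g" using g(1) orthogonal_transformation_linear by blast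
  have axis_nth_eq: "axis j 1 $ i = (if i = j then 1 else 0)" for i j :: 'n
    by (simp add: axis_def)
  have "stretch t w \<circ> g = g \<circ> stretch t ?e"
  proof
    fix y
    have "w \<bullet> g y = ?e \<bullet> y"
      using g unfolding orthogonal_transformation_def by metis
    then show "(stretch t w \<circ> g) y = (g \<circ> stretch t ?e) y"
      by (simp add: stretch_def linear_add[OF lg] linear_scale[OF lg] g(2))
  qed
  then have "matrix (stretch t w) ** matrix g = matrix g ** matrix (stretch t ?e)"
    by (metis matrix_compose[OF lg linear_stretch] matrix_compose[OF linear_stretch lg])
  then have "det (matrix (stretch t w)) * det (matrix g) = det (matrix g) * det (matrix (stretch t ?e))"
    by (metis det_mul)
  moreover have "det (matrix g) \<noteq> 0"
    using orthogonal_transformation_det[OF g(1)] by auto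
  ultimately have "det (matrix (stretch t w)) = det (matrix (stretch t ?e))"
    by simp
  also have "\<dots> = (\<Prod>i\<in>UNIV. matrix (stretch t ?e) $ i $ i)"
    by (rule det_diagonal) (simp add: matrix_def stretch_def inner_axis_axis axis_nth_eq)
  also have "\<dots> = (\<Prod>i\<in>UNIV. if i = i0 then t else 1)"
    by (rule prod.cong) (auto simp: matrix_def stretch_def inner_axis_axis axis_nth_eq)
  also have "\<dots> = t"
    by (simp add: prod.If_cases)
  finally show ?thesis .
qed

lemma abs_det_le_fact_prod_norm_rows:
  fixes A :: "real^'n^'n"
  shows "\<bar>det A\<bar> \<le> fact CARD('n) * (\<Prod>i\<in>UNIV. norm (A $ i))"
proof -
  have "\<bar>det A\<bar> \<le> (\<Sum>p\<in>{p. p permutes (UNIV::'n set)}. \<bar>of_int (sign p) * (\<Prod>i\<in>UNIV. A $ i $ p i)\<bar>)"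
    unfolding det_def by (rule sum_abs)
  also have "\<dots> \<le> (\<Sum>p\<in>{p. p permutes (UNIV::'n set)}. \<Prod>i\<in>UNIV. norm (A $ i))"
  proof (rule sum_mono)
    fix p :: "'n \<Rightarrow> 'n"
    have "\<bar>of_int (sign p) * (\<Prod>i\<in>UNIV. A $ i $ p i)\<bar> = (\<Prod>i\<in>UNIV. \<bar>A $ i $ p i\<bar>)"
      by (simp add: sign_def abs_mult abs_prod)
    also have "\<dots> \<le> (\<Prod>i\<in>UNIV. norm (A $ i))"
      by (rule prod_mono) (simp add: component_le_norm_cart)
    finally show "\<bar>of_int (sign p) * (\<Prod>i\<in>UNIV. A $ i $ p i)\<bar> \<le> (\<Prod>i\<in>UNIV. norm (A $ i))" .
  qed
  also have "\<dots> = fact CARD('n) * (\<Prod>i\<in>UNIV. norm (A $ i))"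
    by (simp add: card_permutations[of "UNIV::'n set" "CARD('n)"])
  finally show ?thesis .
qed

definition frame :: "('n::finite \<Rightarrow> 's option) \<Rightarrow> ('n \<Rightarrow> real^'n) \<Rightarrow> ('s \<Rightarrow> real^'n) \<Rightarrow> real^'n^'n" where
  "frame \<sigma> z u = (\<chi> i. case \<sigma> i of Some s \<Rightarrow> u s | None \<Rightarrow> z i)"

lemma frame_map:
  assumes "linear f" "\<And>i. \<sigma> i = None \<Longrightarrow> f (z i) = z i"
  shows "frame \<sigma> z (\<lambda>s. f (u s)) = frame \<sigma> z u ** transpose (matrix f)"
proof -
  have "(frame \<sigma> z u ** transpose (matrix f)) $ i = matrix f *v (frame \<sigma> z u $ i)" for i
    by (simp add: vec_eq_iff matrix_matrix_mult_def matrix_vector_mult_def transpose_def mult.commute)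
  then have "(frame \<sigma> z u ** transpose (matrix f)) $ i = f (frame \<sigma> z u $ i)" for i
    using fun_cong[OF matrix_vector_mul(2)[OF assms(1)]] by simp
  then show ?thesis
    using assms(2) by (auto simp: vec_eq_iff frame_def split: option.split)
qed

lemma det_frame_map:
  assumes "linear f" "\<And>i. \<sigma> i = None \<Longrightarrow> f (z i) = z i"
  shows "det (frame \<sigma> z (\<lambda>s. f (u s))) = det (frame \<sigma> z u) * det (matrix f)"
  by (simp add: frame_map[OF assms] det_mul det_transpose)

definition max_row_norm :: "('s::finite \<Rightarrow> real^'n) \<Rightarrow> real" where
  "max_row_norm u = Max (range (\<lambda>s. norm (u s)))"

lemma norm_le_max_row_norm: "norm (u s) \<le> max_row_norm u"
  unfolding max_row_norm_def by (rule Max_ge) auto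

lemma max_row_norm_le: "(\<And>s. norm (u s) \<le> b) \<Longrightarrow> max_row_norm u \<le> b"
  unfolding max_row_norm_def by (subst Max_le_iff) auto

lemma max_row_norm_nonneg: "0 \<le> max_row_norm u"
  using norm_le_max_row_norm[of u undefined] norm_ge_zero order_trans by metis

lemma abs_det_frame_le:
  fixes \<sigma> :: "'n::finite \<Rightarrow> 's::finite option"
  shows "\<bar>det (frame \<sigma> z u)\<bar>
    \<le> fact CARD('n) * (\<Prod>i\<in>{i. \<sigma> i = None}. norm (z i)) * max_row_norm u ^ card {i. \<sigma> i \<noteq> None}"
proof -
  have "(\<Prod>i\<in>UNIV. norm (frame \<sigma> z u $ i))
      = (\<Prod>i\<in>UNIV. if \<sigma> i \<noteq> None then norm (u (the (\<sigma> i))) else norm (z i))"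
    by (rule prod.cong) (auto simp: frame_def split: option.split)
  also have "\<dots> = (\<Prod>i\<in>{i. \<sigma> i \<noteq> None}. norm (u (the (\<sigma> i)))) * (\<Prod>i\<in>{i. \<sigma> i = None}. norm (z i))"
    by (simp add: prod.If_cases Collect_neg_eq[symmetric])
  also have "\<dots> \<le> max_row_norm u ^ card {i. \<sigma> i \<noteq> None} * (\<Prod>i\<in>{i. \<sigma> i = None}. norm (z i))"
  proof (rule mult_right_mono)
    show "(\<Prod>i\<in>{i. \<sigma> i \<noteq> None}. norm (u (the (\<sigma> i)))) \<le> max_row_norm u ^ card {i. \<sigma> i \<noteq> None}"
      using prod_mono[of "{i. \<sigma> i \<noteq> None}" "\<lambda>i. norm (u (the (\<sigma> i)))" "\<lambda>_. max_row_norm u"]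
      by (simp add: norm_le_max_row_norm)
  qed (simp add: prod_nonneg)
  finally have rows: "(\<Prod>i\<in>UNIV. norm (frame \<sigma> z u $ i))
      \<le> max_row_norm u ^ card {i. \<sigma> i \<noteq> None} * (\<Prod>i\<in>{i. \<sigma> i = None}. norm (z i))" .
  have "\<bar>det (frame \<sigma> z u)\<bar> \<le> fact CARD('n) * (\<Prod>i\<in>UNIV. norm (frame \<sigma> z u $ i))"
    by (rule abs_det_le_fact_prod_norm_rows)
  also have "\<dots> \<le> fact CARD('n) * (max_row_norm u ^ card {i. \<sigma> i \<noteq> None} * (\<Prod>i\<in>{i. \<sigma> i = None}. norm (z i)))"
    by (rule mult_left_mono[OF rows]) simp
  finally show ?thesis by (simp only: mult_ac)
qed

definition balanced :: "real \<Rightarrow> (real^'n) set \<Rightarrow> ('s::finite \<Rightarrow> real^'n) \<Rightarrow> bool" where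
  "balanced \<delta> W u \<longleftrightarrow> (\<forall>w\<in>W. norm w = 1 \<longrightarrow> (\<exists>s. \<delta> * (max_row_norm u)\<^sup>2 \<le> (u s \<bullet> w)\<^sup>2))"

lemma norm_le_if_balanced:
  assumes "balanced \<delta> W u" "subspace W" "v \<in> W" "\<And>s. \<bar>u s \<bullet> v\<bar> \<le> 1" "0 < max_row_norm u" "0 < \<delta>"
  shows "norm v \<le> 1 / (sqrt \<delta> * max_row_norm u)"
proof (cases "v = 0")
  case False
  define w where "w = v /\<^sub>R norm v"
  have "w \<in> W" "norm w = 1"
    using assms(2,3) False by (simp_all add: w_def subspace_scale)
  then obtain s where s: "\<delta> * (max_row_norm u)\<^sup>2 \<le> (u s \<bullet> w)\<^sup>2"
    using assms(1) unfolding balanced_def by blast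
  have "(u s \<bullet> w)\<^sup>2 = (u s \<bullet> v)\<^sup>2 / (norm v)\<^sup>2"
    by (simp add: w_def power_mult_distrib power_inverse divide_inverse mult.commute)
  also have "\<dots> \<le> 1 / (norm v)\<^sup>2"
    using abs_le_square_iff[of "u s \<bullet> v" 1] assms(4)[of s] by (intro divide_right_mono) simp_all
  finally have "\<delta> * (max_row_norm u)\<^sup>2 \<le> 1 / (norm v)\<^sup>2"
    using s by linarith
  then have "(norm v)\<^sup>2 \<le> 1 / (\<delta> * (max_row_norm u)\<^sup>2)"
    using False assms(5,6) by (simp add: field_simps)
  then have "norm v \<le> sqrt (1 / (\<delta> * (max_row_norm u)\<^sup>2))"
    by (rule real_le_rsqrt)
  then show ?thesis
    using assms(5,6) by (simp add: real_sqrt_divide real_sqrt_mult)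
qed (use assms in simp)

lemma max_row_norm_stretch_ge:
  assumes "norm w = 1" "1 \<le> t\<^sup>2"
  shows "max_row_norm u \<le> max_row_norm (\<lambda>s. stretch t w (u s))"
proof (rule max_row_norm_le)
  fix s
  have "(norm (u s))\<^sup>2 \<le> (norm (stretch t w (u s)))\<^sup>2"
    using assms by (simp add: norm_stretch_squared)
  then show "norm (u s) \<le> max_row_norm (\<lambda>s. stretch t w (u s))"
    using norm_le_max_row_norm[of "\<lambda>s. stretch t w (u s)" s] by (meson norm_ge_zero order_trans power2_le_imp_le)
qed

lemma max_row_norm_stretch_le:
  assumes "norm w = 1" "\<forall>s. (u s \<bullet> w)\<^sup>2 \<le> \<delta> * (max_row_norm u)\<^sup>2" "0 \<le> \<delta>"
  shows "max_row_norm (\<lambda>s. stretch (sqrt 2) w (u s)) \<le> sqrt (1 + \<delta>) * max_row_norm u"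
proof (rule max_row_norm_le)
  fix s
  have "(norm (stretch (sqrt 2) w (u s)))\<^sup>2 = (norm (u s))\<^sup>2 + (w \<bullet> u s)\<^sup>2"
    using assms(1) by (simp add: norm_stretch_squared)
  also have "\<dots> \<le> (max_row_norm u)\<^sup>2 + \<delta> * (max_row_norm u)\<^sup>2"
  proof (rule add_mono)
    show "(norm (u s))\<^sup>2 \<le> (max_row_norm u)\<^sup>2"
      by (rule power_mono[OF norm_le_max_row_norm norm_ge_zero])
    show "(w \<bullet> u s)\<^sup>2 \<le> \<delta> * (max_row_norm u)\<^sup>2"
      using assms(2) by (simp only: inner_commute)
  qed
  also have "\<dots> = (sqrt (1 + \<delta>) * max_row_norm u)\<^sup>2"
    using assms(3) by (simp add: power_mult_distrib algebra_simps)
  finally show "norm (stretch (sqrt 2) w (u s)) \<le> sqrt (1 + \<delta>) * max_row_norm u"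
    by (rule power2_le_imp_le) (simp add: assms(3) max_row_norm_nonneg)
qed

lemma one_plus_power_le:
  assumes "0 \<le> \<delta>" "real k * \<delta> \<le> 1 / 2"
  shows "(1 + \<delta>) ^ k \<le> (7 / 4 :: real)"
proof -
  have "(1 + \<delta>) ^ k \<le> exp \<delta> ^ k"
    using assms(1) by (intro power_mono) (simp_all add: exp_ge_add_one_self)
  also have "\<dots> = exp (real k * \<delta>)"
    by (simp add: exp_of_nat_mult)
  also have "\<dots> \<le> exp (1 / 2)"
    using assms(2) by simp
  also have "\<dots> \<le> 1 + 1 / 2 + (1 / 2)\<^sup>2"
    by (rule exp_bound) simp_all
  finally show ?thesis by (simp add: power2_eq_square)
qed

definition frame_potential :: "('n::finite \<Rightarrow> 's option) \<Rightarrow> ('n \<Rightarrow> real^'n) \<Rightarrow> ('s::finite \<Rightarrow> real^'n) \<Rightarrow> real" where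
  "frame_potential \<sigma> z u = \<bar>det (frame \<sigma> z u)\<bar> / max_row_norm u ^ card {i. \<sigma> i \<noteq> None}"

lemma frame_potential_le:
  fixes \<sigma> :: "'n::finite \<Rightarrow> 's::finite option"
  assumes "0 < max_row_norm u"
  shows "frame_potential \<sigma> z u \<le> fact CARD('n) * (\<Prod>i\<in>{i. \<sigma> i = None}. norm (z i))"
  using abs_det_frame_le[of \<sigma> z u] assms by (simp add: frame_potential_def pos_divide_le_eq)

text \<open>The determinant gains \<open>\<surd>2\<close>; since \<open>k \<delta> \<le> 1/2\<close>, the \<open>k\<close>-th power of the largest row
  norm grows by at most \<open>\<surd>(7/4)\<close>.\<close>
lemma frame_potential_stretch:
  fixes \<sigma> :: "'n::finite \<Rightarrow> 's::finite option"
  assumes zW: "\<And>i x. \<sigma> i = None \<Longrightarrow> x \<in> W \<Longrightarrow> z i \<bullet> x = 0"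
    and w: "w \<in> W" "norm w = 1" and small: "\<forall>s. (u s \<bullet> w)\<^sup>2 \<le> \<delta> * (max_row_norm u)\<^sup>2"
    and \<delta>: "0 \<le> \<delta>" "real (card {i. \<sigma> i \<noteq> None}) * \<delta> \<le> 1 / 2"
    and m: "0 < max_row_norm u"
  shows "sqrt (8 / 7) * frame_potential \<sigma> z u \<le> frame_potential \<sigma> z (\<lambda>s. stretch (sqrt 2) w (u s))"
proof -
  let ?u' = "\<lambda>s. stretch (sqrt 2) w (u s)"
  let ?k = "card {i. \<sigma> i \<noteq> None}"
  have "stretch (sqrt 2) w (z i) = z i" if "\<sigma> i = None" for i
    using zW[OF that w(1)] by (simp add: stretch_orthogonal inner_commute)
  then have det: "\<bar>det (frame \<sigma> z ?u')\<bar> = sqrt 2 * \<bar>det (frame \<sigma> z u)\<bar>"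
    by (simp add: det_frame_map[OF linear_stretch] det_matrix_stretch[OF w(2)] abs_mult)
  have m': "0 < max_row_norm ?u' ^ ?k"
    using m max_row_norm_stretch_ge[OF w(2), of "sqrt 2" u] by simp
  have "max_row_norm ?u' ^ ?k \<le> (sqrt (1 + \<delta>) * max_row_norm u) ^ ?k"
    using max_row_norm_stretch_le[OF w(2) small \<delta>(1)] max_row_norm_nonneg
    by (intro power_mono) simp_all
  also have "\<dots> = sqrt ((1 + \<delta>) ^ ?k) * max_row_norm u ^ ?k"
    by (simp add: power_mult_distrib real_sqrt_power)
  also have "\<dots> \<le> sqrt (7 / 4) * max_row_norm u ^ ?k"
    using one_plus_power_le[OF \<delta>] max_row_norm_nonneg[of u] by (intro mult_right_mono) simp_all
  finally have growth: "max_row_norm ?u' ^ ?k \<le> sqrt (7 / 4) * max_row_norm u ^ ?k" .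
  have "sqrt (8 / 7) * frame_potential \<sigma> z u = sqrt 2 * \<bar>det (frame \<sigma> z u)\<bar> / (sqrt (7 / 4) * max_row_norm u ^ ?k)"
  proof -
    have "sqrt 2 = sqrt (8 / 7) * sqrt (7 / 4)"
      by (simp add: real_sqrt_mult[symmetric])
    then show ?thesis
      using m by (simp add: frame_potential_def)
  qed
  also have "\<dots> \<le> sqrt 2 * \<bar>det (frame \<sigma> z u)\<bar> / max_row_norm ?u' ^ ?k"
    using growth m' by (intro divide_left_mono) simp_all
  also have "\<dots> = frame_potential \<sigma> z ?u'"
    by (simp add: frame_potential_def det)
  finally show ?thesis .
qed

lemma potential_method:
  fixes \<phi> :: "'x \<Rightarrow> real"
  assumes "P init" "0 < \<phi> init" "1 < c" "\<And>x. P x \<Longrightarrow> \<phi> x \<le> B"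
    and step: "\<And>x. P x \<Longrightarrow> \<not> Q x \<Longrightarrow> \<exists>y. P y \<and> c * \<phi> x \<le> \<phi> y"
  shows "\<exists>x. P x \<and> Q x"
proof (rule ccontr)
  assume "\<not> (\<exists>x. P x \<and> Q x)"
  then have step': "\<exists>y. P y \<and> c * \<phi> x \<le> \<phi> y" if "P x" for x
    using step that by blast
  have "\<exists>x. P x \<and> c ^ n * \<phi> init \<le> \<phi> x" for n
  proof (induction n)
    case 0
    show ?case using assms(1) by auto
  next
    case (Suc n)
    then obtain x where x: "P x" "c ^ n * \<phi> init \<le> \<phi> x" by blast
    then obtain y where y: "P y" "c * \<phi> x \<le> \<phi> y" using step' by blast
    have "c ^ Suc n * \<phi> init \<le> c * \<phi> x"
      using x(2) assms(3) by simp
    then show ?case using y by force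
  qed
  then have "c ^ n \<le> B / \<phi> init" for n
    using assms(2,4) order_trans by (metis pos_le_divide_eq)
  moreover obtain n where "B / \<phi> init < c ^ n"
    using real_arch_pow[OF assms(3)] by blast
  ultimately show False
    by (meson not_le)
qed

lemma exists_balanced_factorization:
  fixes \<sigma> :: "'n::finite \<Rightarrow> 's::finite option" and u0 :: "'s \<Rightarrow> real^'n" and v0 :: "'b \<Rightarrow> real^'n"
  assumes W: "subspace W" and zW: "\<And>i x. \<sigma> i = None \<Longrightarrow> x \<in> W \<Longrightarrow> z i \<bullet> x = 0"
    and \<delta>: "0 \<le> \<delta>" "real (card {i. \<sigma> i \<noteq> None}) * \<delta> \<le> 1 / 2"
    and det: "det (frame \<sigma> z u0) \<noteq> 0" and m: "0 < max_row_norm u0" and v0: "\<forall>b. v0 b \<in> W"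
  obtains u v where "balanced \<delta> W u" "0 < max_row_norm u" "\<forall>b. v b \<in> W"
    "\<forall>s b. u s \<bullet> v b = u0 s \<bullet> v0 b"
proof -
  define P where "P = (\<lambda>(u :: 's \<Rightarrow> real^'n, v :: 'b \<Rightarrow> real^'n).
    0 < max_row_norm u \<and> (\<forall>b. v b \<in> W) \<and> (\<forall>s b. u s \<bullet> v b = u0 s \<bullet> v0 b))"
  have "\<exists>x. P x \<and> balanced \<delta> W (fst x)"
  proof (rule potential_method[where \<phi> = "\<lambda>x. frame_potential \<sigma> z (fst x)" and init = "(u0, v0)"])
    show "P (u0, v0)"
      using m v0 by (simp add: P_def)
    show "0 < frame_potential \<sigma> z (fst (u0, v0))"
      using det m by (simp add: frame_potential_def)
    show "1 < sqrt (8 / 7 :: real)"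
      by simp
    show "frame_potential \<sigma> z (fst x) \<le> fact CARD('n) * (\<Prod>i\<in>{i. \<sigma> i = None}. norm (z i))"
      if "P x" for x
      using that by (intro frame_potential_le) (auto simp: P_def)
  next
    fix x assume "P x" "\<not> balanced \<delta> W (fst x)"
    then obtain u v where x: "x = (u, v)" and m: "0 < max_row_norm u" and v: "\<forall>b. v b \<in> W"
      and inner: "\<forall>s b. u s \<bullet> v b = u0 s \<bullet> v0 b" and "\<not> balanced \<delta> W u"
      by (auto simp: P_def)
    then obtain w where w: "w \<in> W" "norm w = 1" and "\<forall>s. (u s \<bullet> w)\<^sup>2 < \<delta> * (max_row_norm u)\<^sup>2"
      by (auto simp: balanced_def not_le)
    then have small: "\<forall>s. (u s \<bullet> w)\<^sup>2 \<le> \<delta> * (max_row_norm u)\<^sup>2"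
      by (simp add: less_imp_le)
    define u' where "u' = (\<lambda>s. stretch (sqrt 2) w (u s))"
    define v' where "v' = (\<lambda>b. stretch (1 / sqrt 2) w (v b))"
    have "P (u', v')"
      unfolding P_def using m max_row_norm_stretch_ge[OF w(2), of "sqrt 2" u] v inner
      by (auto simp: u'_def v'_def stretch_in_subspace[OF W w(1)] inner_stretch_stretch_inverse[OF w(2)])
    moreover have "sqrt (8 / 7) * frame_potential \<sigma> z (fst x) \<le> frame_potential \<sigma> z (fst (u', v'))"
      using frame_potential_stretch[OF zW w small \<delta> m] by (simp add: x u'_def)
    ultimately show "\<exists>y. P y \<and> sqrt (8 / 7) * frame_potential \<sigma> z (fst x) \<le> frame_potential \<sigma> z (fst y)"
      by blast
  qed
  then show thesis
    using that by (auto simp: P_def)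
qed

lemma exists_projections_onto_row_space:
  fixes r :: "real^'a::finite^'s::finite"
  obtains v where "\<forall>a. v a \<in> span (range (vec_nth r))" "\<forall>s a. r $ s \<bullet> v a = r $ s $ a"
proof -
  have "\<exists>y \<in> span (range (vec_nth r)). \<forall>x \<in> span (range (vec_nth r)). orthogonal (axis a 1 - y) x" for a
  proof -
    obtain y z where "y \<in> span (range (vec_nth r))" "\<And>x. x \<in> span (range (vec_nth r)) \<Longrightarrow> orthogonal z x"
      "axis a 1 = y + z"
      using orthogonal_subspace_decomp_exists[of "range (vec_nth r)" "axis a 1"] by metis
    then show ?thesis
      by (intro bexI[of _ y]) simp_all
  qed
  then obtain v where v: "\<forall>a. v a \<in> span (range (vec_nth r))"
    "\<And>a x. x \<in> span (range (vec_nth r)) \<Longrightarrow> orthogonal (axis a 1 - v a) x"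
    by metis
  have "r $ s \<bullet> v a = r $ s $ a" for s a
  proof -
    have "(axis a 1 - v a) \<bullet> r $ s = 0"
      using v(2)[of "r $ s" a] by (simp add: orthogonal_def span_base)
    then have "v a \<bullet> r $ s = axis a 1 \<bullet> r $ s"
      by (simp add: inner_diff_left)
    then show ?thesis
      by (simp add: inner_axis' inner_commute[of "r $ s"])
  qed
  then show thesis
    using that v(1) by blast
qed

lemma exists_basis_extension_orthogonal:
  fixes U :: "(real^'n::finite) set"
  obtains B Z where "B \<subseteq> U" "card B = dim U" "\<forall>z\<in>Z. \<forall>x\<in>span U. x \<bullet> z = 0"
    "finite (B \<union> Z)" "span (B \<union> Z) = UNIV" "card (B \<union> Z) = CARD('n)"
proof -
  define Wp where "Wp = {y. \<forall>x\<in>span U. orthogonal x y}"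
  obtain B where B: "B \<subseteq> U" "independent B" "U \<subseteq> span B" "card B = dim U"
    using basis_exists[of U] by metis
  obtain Z where Z: "Z \<subseteq> Wp" "independent Z" "Wp \<subseteq> span Z" "card Z = dim Wp"
    using basis_exists[of Wp] by metis
  have fin: "finite (B \<union> Z)"
    using B(2) Z(2) by (simp add: finiteI_independent)
  have "dim Wp + dim U = CARD('n)"
    using dim_subspace_orthogonal_to_vectors[of "span U" UNIV] by (simp add: Wp_def subspace_span)
  then have card_le: "card (B \<union> Z) \<le> CARD('n)"
    using card_Un_le[of B Z] B(4) Z(4) by linarith
  have "x \<in> span (B \<union> Z)" for x :: "real^'n"
  proof -
    obtain y z where "y \<in> span U" "\<And>w. w \<in> span U \<Longrightarrow> orthogonal z w" "x = y + z"
      using orthogonal_subspace_decomp_exists[of U x] by metis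
    moreover have "span U \<subseteq> span B"
      using B(3) by (simp add: span_minimal)
    moreover have "z \<in> Wp"
      using calculation(2) by (simp add: Wp_def orthogonal_commute)
    ultimately show ?thesis
      using Z(3) span_mono[of B "B \<union> Z"] span_mono[of Z "B \<union> Z"]
      by (metis (no_types, lifting) span_add subsetD sup_ge1 sup_ge2)
  qed
  then have span: "span (B \<union> Z) = UNIV"
    by auto
  then have "CARD('n) \<le> card (B \<union> Z)"
    using dim_le_card'[of "B \<union> Z"] fin dim_span[of "B \<union> Z"] by simp
  then show thesis
    using that[of B Z] B(1,4) Z(1) fin span card_le by (auto simp: Wp_def orthogonal_def)
qed

lemma exists_frame:
  fixes u :: "'s::finite \<Rightarrow> real^'n::finite"
  obtains \<sigma> z where "det (frame \<sigma> z u) \<noteq> 0" "card {i. \<sigma> i \<noteq> None} = dim (range u)"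
    "\<And>i x. \<sigma> i = None \<Longrightarrow> x \<in> span (range u) \<Longrightarrow> z i \<bullet> x = 0"
proof -
  obtain B Z where B: "B \<subseteq> range u" "card B = dim (range u)"
    and Z: "\<forall>z\<in>Z. \<forall>x\<in>span (range u). x \<bullet> z = 0"
    and BZ: "finite (B \<union> Z)" "span (B \<union> Z) = UNIV" "card (B \<union> Z) = CARD('n)"
    by (rule exists_basis_extension_orthogonal)
  obtain f where f: "bij_betw f (UNIV::'n set) (B \<union> Z)"
    using finite_same_card_bij[of "UNIV::'n set" "B \<union> Z"] BZ(1,3) by auto
  define \<sigma> where "\<sigma> i = (if f i \<in> B then Some (SOME s. u s = f i) else None)" for i
  have frame: "frame \<sigma> f u = (\<chi> i. f i)"
  proof -
    have "u (SOME s. u s = f i) = f i" if "f i \<in> B" for i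
      using that B(1) by (metis (mono_tags, lifting) image_iff someI_ex subsetD)
    then show ?thesis
      by (simp add: vec_eq_iff frame_def \<sigma>_def)
  qed
  show thesis
  proof
    have "rows (\<chi> i. f i) = B \<union> Z"
      using f by (auto simp: rows_def row_def vec_lambda_eta bij_betw_def)
    then have "rank (\<chi> i. f i) = CARD('n)"
      using BZ(2) dim_span[of "B \<union> Z"] by (simp add: row_rank_def)
    then show "det (frame \<sigma> f u) \<noteq> 0"
      by (simp add: frame det_eq_0_rank)
    have "{i. \<sigma> i \<noteq> None} = {i. f i \<in> B}"
      by (auto simp: \<sigma>_def)
    moreover have "bij_betw f {i. f i \<in> B} B"
      using f by (auto simp: bij_betw_def inj_on_def)
    ultimately show "card {i. \<sigma> i \<noteq> None} = dim (range u)"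
      using B(2) by (simp add: bij_betw_same_card)
    fix i x assume "\<sigma> i = None" "x \<in> span (range u)"
    moreover have "f i \<in> Z"
      using f \<open>\<sigma> i = None\<close> by (auto simp: \<sigma>_def bij_betw_def split: if_splits)
    ultimately show "f i \<bullet> x = 0"
      using Z by (metis inner_commute)
  qed
qed

lemma max_norm_le_sqrt_two_rank:
  fixes r :: "real^'a::finite^'s::finite"
  assumes entries: "\<forall>s a. \<bar>r $ s $ a\<bar> \<le> 1"
  shows "max_norm r \<le> sqrt (2 * rank r)"
proof (cases "r = 0")
  case True
  have "max_norm r \<le> 0 * 0"
    by (rule max_norm_le_inner_factorization[where u = "\<lambda>_. 0 :: real^'a" and v = "\<lambda>_. 0"])
      (simp_all add: True)
  moreover have "0 \<le> sqrt (2 * rank r)"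
    by simp
  ultimately show ?thesis
    by linarith
next
  case False
  define u where "u = vec_nth r"
  define k where "k = rank r"
  define \<delta> where "\<delta> = 1 / (2 * real k)"
  have k: "k = dim (range u)"
    by (simp add: k_def u_def row_rank_def rows_def row_def vec_lambda_eta full_SetCompr_eq)
  have "0 < k"
    using False rank_eq_0[of r] by (simp add: k_def)
  obtain v0 where v0: "\<forall>a. v0 a \<in> span (range u)" "\<forall>s a. u s \<bullet> v0 a = r $ s $ a"
    using exists_projections_onto_row_space[of r] by (metis u_def)
  obtain \<sigma> and z :: "'a \<Rightarrow> real^'a" where frame: "det (frame \<sigma> z u) \<noteq> 0"
    "card {i. \<sigma> i \<noteq> None} = k" "\<And>i x. \<sigma> i = None \<Longrightarrow> x \<in> span (range u) \<Longrightarrow> z i \<bullet> x = 0"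
    using exists_frame[of u] k by metis
  obtain s0 where "u s0 \<noteq> 0"
    using False by (auto simp: u_def vec_eq_iff)
  then have "0 < max_row_norm u"
    using norm_le_max_row_norm[of u s0] by (metis zero_less_norm_iff order_less_le_trans)
  moreover have \<delta>: "0 \<le> \<delta>" "real (card {i. \<sigma> i \<noteq> None}) * \<delta> \<le> 1 / 2"
    using frame(2) \<open>0 < k\<close> by (simp_all add: \<delta>_def)
  ultimately obtain u' v' where bal: "balanced \<delta> (span (range u)) u'" "0 < max_row_norm u'"
    "\<forall>a. v' a \<in> span (range u)" "\<forall>s a. u' s \<bullet> v' a = u s \<bullet> v0 a"
    using exists_balanced_factorization[OF subspace_span frame(3) \<delta> frame(1) _ v0(1)] by blast
  have "norm (v' a) \<le> 1 / (sqrt \<delta> * max_row_norm u')" for a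
    using bal v0(2) entries \<open>0 < k\<close>
    by (intro norm_le_if_balanced[OF bal(1) subspace_span]) (auto simp: \<delta>_def)
  then have "max_norm r \<le> max_row_norm u' * (1 / (sqrt \<delta> * max_row_norm u'))"
    using bal(4) v0(2) by (intro max_norm_le_inner_factorization[where u = u' and v = v'])
      (auto simp: norm_le_max_row_norm)
  also have "\<dots> = sqrt (2 * rank r)"
    using bal(2) \<open>0 < k\<close> by (simp add: \<delta>_def k_def real_sqrt_divide)
  finally show ?thesis .
qed

lemma is_distr_occ: "is_state_distr \<mu> \<Longrightarrow> is_policy \<pi> \<Longrightarrow> is_distr (occ \<mu> \<pi>)"
  unfolding is_distr_def is_state_distr_def is_policy_def occ_def
  by (simp add: sum_distrib_left[symmetric])

lemma Dis_nonneg: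
  assumes "is_distr p"
  shows "0 \<le> Dis p q"
  unfolding Dis_def using assms by (intro cInf_greatest) (auto simp: op_norm_nonneg)

lemma abs_entry_inner_diff_le_Dis:
  fixes Q r p q :: "real^'a::finite^'s::finite"
  assumes "is_distr p" and agree: "\<forall>s a. (s, a) \<in> supp p \<longrightarrow> Q $ s $ a = r $ s $ a"
  shows "\<bar>entry_inner q Q - entry_inner q r\<bar>
    \<le> sqrt CARD('s) * sqrt CARD('a) * (max_norm Q + max_norm r) * Dis p q"
  unfolding Dis_def
proof (rule le_mult_Inf)
  show "{op_norm (g - q) |g. is_distr g \<and> supp g \<subseteq> supp p} \<noteq> {}"
    using assms(1) by blast
  show "0 \<le> sqrt CARD('s) * sqrt CARD('a) * (max_norm Q + max_norm r)"
    by (intro mult_nonneg_nonneg add_nonneg_nonneg max_norm_nonneg) simp_all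
next
  fix y assume "y \<in> {op_norm (g - q) |g. is_distr g \<and> supp g \<subseteq> supp p}"
  then obtain g where y: "y = op_norm (g - q)" and g: "supp g \<subseteq> supp p" by blast
  have "entry_inner g Q = entry_inner g r"
    unfolding entry_inner_def using g agree by (intro sum.cong refl) (auto simp: supp_def)
  then have "entry_inner q Q - entry_inner q r = entry_inner (g - q) r - entry_inner (g - q) Q"
    by (simp add: entry_inner_diff_left)
  then have "\<bar>entry_inner q Q - entry_inner q r\<bar> \<le> \<bar>entry_inner (g - q) Q\<bar> + \<bar>entry_inner (g - q) r\<bar>"
    by linarith
  also have "\<dots> \<le> y * sqrt CARD('s) * sqrt CARD('a) * max_norm Q + y * sqrt CARD('s) * sqrt CARD('a) * max_norm r"
    unfolding y by (intro add_mono abs_entry_inner_le_max_norm)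
  finally show "\<bar>entry_inner q Q - entry_inner q r\<bar> \<le> sqrt CARD('s) * sqrt CARD('a) * (max_norm Q + max_norm r) * y"
    by (simp add: algebra_simps)
qed

theorem corollary3:
  fixes \<mu> :: "'s::finite \<Rightarrow> real"
    and \<pi>\<theta> \<pi>\<beta> :: "'s \<Rightarrow> 'a::finite \<Rightarrow> real"
    and r Qhat :: "real^'a^'s"
    and d :: nat
  assumes "is_state_distr \<mu>"
    and "is_policy \<pi>\<theta>" and "is_policy \<pi>\<beta>"
    and "\<forall>s a. 0 \<le> r $ s $ a \<and> r $ s $ a \<le> 1"
    and "rank r \<le> d div 2"
    and "feasible (occ \<mu> \<pi>\<beta>) r Qhat"
    and "\<forall>M. feasible (occ \<mu> \<pi>\<beta>) r M \<longrightarrow> max_norm Qhat \<le> max_norm M"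
  shows "\<bar>policy_value \<mu> \<pi>\<theta> Qhat - policy_value \<mu> \<pi>\<theta> r\<bar>
           \<le> 2 * sqrt (real (d * CARD('s) * CARD('a))) * Dis (occ \<mu> \<pi>\<beta>) (occ \<mu> \<pi>\<theta>)"
proof -
  let ?p = "occ \<mu> \<pi>\<beta>" and ?q = "occ \<mu> \<pi>\<theta>"
  have entries: "\<forall>s a. \<bar>r $ s $ a\<bar> \<le> 1"
    using assms(4) by auto
  have "max_norm r \<le> sqrt (2 * rank r)"
    using entries by (rule max_norm_le_sqrt_two_rank)
  also have "\<dots> \<le> sqrt d"
    using assms(5) by simp
  finally have r_bound: "max_norm r \<le> sqrt d" .
  have "feasible ?p r r"
    using entries by (simp add: feasible_def entry_inf_norm_def)
  then have norms: "max_norm Qhat + max_norm r \<le> 2 * sqrt d"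
    using assms(7) r_bound by fastforce
  have "\<bar>policy_value \<mu> \<pi>\<theta> Qhat - policy_value \<mu> \<pi>\<theta> r\<bar> = \<bar>entry_inner ?q Qhat - entry_inner ?q r\<bar>"
    by (simp add: policy_value_def entry_inner_def)
  also have "\<dots> \<le> sqrt CARD('s) * sqrt CARD('a) * (max_norm Qhat + max_norm r) * Dis ?p ?q"
    using assms(6) by (intro abs_entry_inner_diff_le_Dis is_distr_occ assms(1,3)) (simp add: feasible_def)
  also have "\<dots> \<le> sqrt CARD('s) * sqrt CARD('a) * (2 * sqrt d) * Dis ?p ?q"
    using norms Dis_nonneg[OF is_distr_occ[OF assms(1,3)]]
    by (intro mult_right_mono mult_left_mono) simp_all
  also have "\<dots> = 2 * sqrt (real (d * CARD('s) * CARD('a))) * Dis ?p ?q"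
    by (simp add: real_sqrt_mult)
  finally show ?thesis .
qed

end
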